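(* Let $P$ be a convex euclidean $p$-gon, and let $G$ be the group of isometries of $\mathbb R^2$ generated by the point reflections $T_1,\dots,T_p$ in the vertices of $P$, with generating set $S=\{T_1,\dots,T_p\}$. Then $|G_S^{(n)}|\prec n^{p-1}$.
   Context: $G_S^{(n)}$ denotes the set of elements of $G$ expressible as products of at most $n$ elements of $S\cup S^{-1}$. $g\prec h$ means $g(n)\le Ch(n)$ for some constant $C$ and all sufficiently large $n$. *)

theory Defs
  imports "HOL-Analysis.Analysis"
begin

definition point_reflection :: "complex \<Rightarrow> complex \<Rightarrow> complex" where
  "point_reflection v = (\<lambda>z. 2 * v - z)"

definition word_ball :: "('a \<Rightarrow> 'a) set \<Rightarrow> nat \<Rightarrow> ('a \<Rightarrow> 'a) set" where
  "word_ball S n = {foldr (\<circ>) fs id | fs. length fs \<le> n \<and> set fs \<subseteq> S \<union> inv ` S}"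

definition convex_polygon :: "nat \<Rightarrow> (nat \<Rightarrow> complex) \<Rightarrow> bool" where
  "convex_polygon p v \<longleftrightarrow> p \<ge> 3 \<and> inj_on v {..<p} \<and>
     (\<forall>i<p. v i \<notin> convex hull (v ` ({..<p} - {i})))"

end

theory Submission
  imports Defs
begin

text \<open>A product of k point reflections in the vertices v i is the map
  z \<mapsto> (-1)^k z + 2 \<Sum> c i v i with integer coefficients satisfying \<Sum> |c i| \<le> k and
  \<Sum> c i = k mod 2. Hence an element of the n-ball is determined by the parity of k and
  by p - 1 of the coefficients, each in [-n, n], giving at most 2 (2n + 1)^(p-1) elements.\<close>

lemma point_reflection_involution: "point_reflection a \<circ> point_reflection a = id"
  by (simp add: point_reflection_def fun_eq_iff)

lemma inv_point_reflection: "inv (point_reflection a) = point_reflection a"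
  by (rule inv_unique_comp) (simp_all add: point_reflection_involution)

lemma word_ball_inv_closed:
  assumes "inv ` S \<subseteq> S"
  shows "word_ball S n = {foldr (\<circ>) fs id | fs. length fs \<le> n \<and> set fs \<subseteq> S}"
  unfolding word_ball_def Un_absorb2[OF assms] ..

lemma foldr_point_reflections_normal_form:
  fixes v :: "'i \<Rightarrow> complex"
  assumes "finite I" and "set fs \<subseteq> point_reflection ` v ` I"
  shows "\<exists>c :: 'i \<Rightarrow> int.
      foldr (\<circ>) fs id = (\<lambda>z. (-1) ^ length fs * z + 2 * (\<Sum>i\<in>I. of_int (c i) * v i)) \<and>
      (\<Sum>i\<in>I. \<bar>c i\<bar>) \<le> int (length fs) \<and> (\<Sum>i\<in>I. c i) = of_bool (odd (length fs))"
  using assms(2)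
proof (induction fs)
  case Nil
  show ?case by (intro exI[of _ "\<lambda>_. 0"]) (simp add: fun_eq_iff)
next
  case (Cons f fs)
  from Cons.prems have "set fs \<subseteq> point_reflection ` v ` I" by simp
  with Cons.IH obtain c where
    c: "foldr (\<circ>) fs id = (\<lambda>z. (-1) ^ length fs * z + 2 * (\<Sum>i\<in>I. of_int (c i) * v i))"
       "(\<Sum>i\<in>I. \<bar>c i\<bar>) \<le> int (length fs)" "(\<Sum>i\<in>I. c i) = of_bool (odd (length fs))"
    by blast
  from Cons.prems obtain j where j: "j \<in> I" "f = point_reflection (v j)" by auto
  define c' where "c' i = of_bool (i = j) - c i" for i
  have "(\<Sum>i\<in>I. of_int (c' i) * v i) = v j - (\<Sum>i\<in>I. of_int (c i) * v i)"
    using assms(1) j(1) by (simp add: c'_def left_diff_distrib sum_subtractf if_distrib cong: if_cong)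
  then have "foldr (\<circ>) (f # fs) id =
      (\<lambda>z. (-1) ^ length (f # fs) * z + 2 * (\<Sum>i\<in>I. of_int (c' i) * v i))"
    using c(1) j(2) by (simp add: fun_eq_iff point_reflection_def right_diff_distrib)
  moreover have "(\<Sum>i\<in>I. \<bar>c' i\<bar>) \<le> (\<Sum>i\<in>I. of_bool (i = j) + \<bar>c i\<bar>)"
    unfolding c'_def by (rule sum_mono) auto
  then have "(\<Sum>i\<in>I. \<bar>c' i\<bar>) \<le> int (length (f # fs))"
    using assms(1) j(1) c(2) by (simp add: sum.distrib)
  moreover have "(\<Sum>i\<in>I. c' i) = of_bool (odd (length (f # fs)))"
    using assms(1) j(1) c(3) by (simp add: c'_def sum_subtractf)
  ultimately show ?case by blast
qed

lemma card_word_ball_point_reflections_le: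
  fixes v :: "nat \<Rightarrow> complex"
  shows "card (word_ball (point_reflection ` v ` {..<Suc q}) n) \<le> 2 * (2 * n + 1) ^ q"
proof -
  define S where "S = point_reflection ` v ` {..<Suc q}"
  define D where "D = ({..<q} \<rightarrow>\<^sub>E {-int n..int n}) \<times> (UNIV :: bool set)"
  \<comment> \<open>the last coefficient is recovered from the others and the parity\<close>
  define F :: "(nat \<Rightarrow> int) \<times> bool \<Rightarrow> complex \<Rightarrow> complex" where
    "F = (\<lambda>(c, odd_length) z. (if odd_length then - z else z) +
       2 * ((\<Sum>i<q. of_int (c i) * v i) + of_int (of_bool odd_length - (\<Sum>i<q. c i)) * v q))"
  have "finite D" by (simp add: D_def finite_PiE)
  have ball_sub: "word_ball S n \<subseteq> F ` D"
  proof
    fix g assume "g \<in> word_ball S n"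
    moreover have "inv ` S \<subseteq> S" by (auto simp: S_def inv_point_reflection)
    ultimately obtain fs where fs: "g = foldr (\<circ>) fs id" "length fs \<le> n" "set fs \<subseteq> S"
      by (auto simp: word_ball_inv_closed)
    obtain c where c: "g = (\<lambda>z. (-1) ^ length fs * z + 2 * (\<Sum>i<Suc q. of_int (c i) * v i))"
      "(\<Sum>i<Suc q. \<bar>c i\<bar>) \<le> int (length fs)" "(\<Sum>i<Suc q. c i) = of_bool (odd (length fs))"
      using foldr_point_reflections_normal_form[of "{..<Suc q}" fs v] fs(1,3) unfolding S_def by auto
    have "\<bar>c i\<bar> \<le> int n" if "i < q" for i
      using member_le_sum[of i "{..<Suc q}" "\<lambda>i. \<bar>c i\<bar>"] that c(2) fs(2) by simp
    then have "restrict c {..<q} \<in> {..<q} \<rightarrow>\<^sub>E {-int n..int n}"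
      by (auto simp: abs_le_iff minus_le_iff)
    moreover have "c q = of_bool (odd (length fs)) - (\<Sum>i<q. c i)"
      using c(3) by simp
    then have "g = F (restrict c {..<q}, odd (length fs))"
      using c(1) by (simp add: F_def fun_eq_iff minus_one_power_iff)
    ultimately show "g \<in> F ` D" unfolding D_def by blast
  qed
  have card_interval: "card {-int n..int n} = 2 * n + 1"
    by simp
  have "card (word_ball S n) \<le> card (F ` D)"
    using ball_sub \<open>finite D\<close> by (intro card_mono finite_imageI)
  also have "\<dots> \<le> card D"
    using \<open>finite D\<close> by (rule card_image_le)
  also have "card D = 2 * (2 * n + 1) ^ q"
    using card_interval by (simp add: D_def card_cartesian_product card_PiE)
  finally show ?thesis unfolding S_def .
qed

theorem mainTheorem16:
  fixes p :: nat and v :: "nat \<Rightarrow> complex"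
  assumes "convex_polygon p v"
  shows "\<exists>C::real. \<forall>\<^sub>F n in sequentially.
           real (card (word_ball (point_reflection ` v ` {..<p}) n)) \<le> C * real n ^ (p - 1)"
proof -
  \<comment> \<open>of the convexity hypothesis only p \<ge> 1 is needed\<close>
  obtain q where p: "p = Suc q"
    using assms by (cases p) (auto simp: convex_polygon_def)
  have "real (card (word_ball (point_reflection ` v ` {..<p}) n)) \<le> 2 * 3 ^ q * real n ^ (p - 1)"
    if "n \<ge> 1" for n
  proof -
    have "real (card (word_ball (point_reflection ` v ` {..<p}) n)) \<le> real (2 * (2 * n + 1) ^ q)"
      unfolding p of_nat_le_iff by (rule card_word_ball_point_reflections_le)
    also have "\<dots> = 2 * (2 * real n + 1) ^ q"
      by (simp add: add.commute)
    also have "\<dots> \<le> 2 * (3 * real n) ^ q"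
      using that by (intro mult_left_mono power_mono) auto
    finally show ?thesis by (simp add: p power_mult_distrib)
  qed
  then show ?thesis by (blast intro: eventually_sequentiallyI)
qed

end
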